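(* For each $n$ let $N_n=(N_{n,1},\ldots,N_{n,M_n})$ be multinomially distributed with parameters $(n,p_{n,1},\ldots,p_{n,M_n})$, where $\liminf_{n\to\infty}n\min_m p_{n,m}>0$. If $\alpha_{n,m}$ are real numbers with $\sum_m|\alpha_{n,m}|=O(1)$ and $\max_m|\alpha_{n,m}|\to0$ as $n\to\infty$, then $$\sum_m\alpha_{n,m}\Big(\frac{N_{n,m}(N_{n,m}-1)}{n(n-1)p_{n,m}^2}-1\Big)\to0\quad\text{in probability}.$$ *)

theory Defs
  imports "HOL-Probability.Probability" "HOL-Library.Landau_Symbols"
begin

text \<open>Categorical distribution on the categories {0..<M} with probabilities p 0, ..., p (M-1).
  (Meaningful when p m \<ge> 0 for m < M and the p m sum to 1.)\<close>
definition categorical_pmf :: "nat \<Rightarrow> (nat \<Rightarrow> real) \<Rightarrow> nat pmf" where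
  "categorical_pmf M p = embed_pmf (\<lambda>m. if m < M then p m else 0)"

text \<open>Count vectors are represented as functions nat \<Rightarrow> nat (zero outside {0..<M}).\<close>
primrec multinomial_pmf :: "nat \<Rightarrow> nat \<Rightarrow> (nat \<Rightarrow> real) \<Rightarrow> (nat \<Rightarrow> nat) pmf" where
  "multinomial_pmf 0 M p = return_pmf (\<lambda>_. 0)"
| "multinomial_pmf (Suc k) M p =
     bind_pmf (multinomial_pmf k M p)
       (\<lambda>N. map_pmf (\<lambda>m. N(m := Suc (N m))) (categorical_pmf M p))"

end

theory Submission
  imports Defs
begin

text \<open>
  The factorial moments of the multinomial law are
  \<open>E[(N\<^sub>m)\<^sub>a (N\<^sub>k)\<^sub>b] = (n)\<^sub>a\<^sub>+\<^sub>b p\<^sub>m\<^sup>a p\<^sub>k\<^sup>b\<close> for \<open>m \<noteq> k\<close>.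
  Hence the normalized pair counts \<open>Y\<^sub>m = N\<^sub>m(N\<^sub>m - 1)/(n(n - 1)p\<^sub>m\<^sup>2) - 1\<close> are centred,
  distinct ones have the common covariance \<open>-(4n - 6)/(n(n - 1)) \<le> 0\<close>, and the variance
  of \<open>Y\<^sub>m\<close> exceeds this value by \<open>O(1/(n p\<^sub>m) + 1/(n p\<^sub>m)\<^sup>2)\<close>.
  Once \<open>n p\<^sub>m \<ge> z > 0\<close> for all \<open>m\<close>, the second moment of \<open>\<Sum>\<^sub>m \<alpha>\<^sub>m Y\<^sub>m\<close> is therefore at most
  \<open>(4/z + 4/z\<^sup>2) max\<^sub>m |\<alpha>\<^sub>m| \<Sum>\<^sub>m |\<alpha>\<^sub>m|\<close>, which tends to zero, and Chebyshev's inequality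
  gives convergence in probability.
\<close>

lemma pmf_categorical_pmf:
  assumes p_nonneg: "\<And>m. m < M \<Longrightarrow> p m \<ge> 0" and p_sum: "(\<Sum>m<M. p m) = 1"
  shows "pmf (categorical_pmf M p) m = (if m < M then p m else 0)"
  unfolding categorical_pmf_def
proof (rule pmf_embed_pmf)
  show "0 \<le> (if m < M then p m else 0)" for m
    using p_nonneg by auto
  have "(\<integral>\<^sup>+ m. ennreal (if m < M then p m else 0) \<partial>count_space UNIV)
       = (\<Sum>m<M. ennreal (p m))"
    by (subst nn_integral_count_space'[of "{..<M}"]) auto
  also have "\<dots> = 1"
    using p_nonneg p_sum by (subst sum_ennreal) auto
  finally show "(\<integral>\<^sup>+ m. ennreal (if m < M then p m else 0) \<partial>count_space UNIV) = 1" .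
qed

lemma set_pmf_categorical_pmf_subset:
  assumes "\<And>m. m < M \<Longrightarrow> p m \<ge> 0" and "(\<Sum>m<M. p m) = 1"
  shows "set_pmf (categorical_pmf M p) \<subseteq> {..<M}"
  using pmf_categorical_pmf[OF assms] by (auto simp: set_pmf_eq)

lemma integral_categorical_pmf:
  fixes h :: "nat \<Rightarrow> real"
  assumes "\<And>m. m < M \<Longrightarrow> p m \<ge> 0" and "(\<Sum>m<M. p m) = 1"
  shows "measure_pmf.expectation (categorical_pmf M p) h = (\<Sum>m<M. p m * h m)"
  using set_pmf_categorical_pmf_subset[OF assms] pmf_categorical_pmf[OF assms]
  by (subst integral_measure_pmf[where A="{..<M}"]) auto

lemma finite_set_pmf_multinomial_pmf:
  assumes "\<And>m. m < M \<Longrightarrow> p m \<ge> 0" and "(\<Sum>m<M. p m) = 1"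
  shows "finite (set_pmf (multinomial_pmf n M p))"
proof (induction n)
  case (Suc n)
  have "finite (set_pmf (categorical_pmf M p))"
    using set_pmf_categorical_pmf_subset[OF assms] finite_subset by blast
  with Suc show ?case
    by (simp add: set_bind_pmf)
qed simp

lemma integral_multinomial_pmf_Suc:
  fixes f :: "(nat \<Rightarrow> nat) \<Rightarrow> real"
  assumes "\<And>m. m < M \<Longrightarrow> p m \<ge> 0" and "(\<Sum>m<M. p m) = 1"
  shows "measure_pmf.expectation (multinomial_pmf (Suc n) M p) f =
     measure_pmf.expectation (multinomial_pmf n M p) (\<lambda>N. \<Sum>j<M. p j * f (N(j := Suc (N j))))"
proof -
  let ?S = "set_pmf (multinomial_pmf n M p)"
  have fin: "finite ?S" "finite (set_pmf (categorical_pmf M p))"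
    using finite_set_pmf_multinomial_pmf[OF assms]
      finite_subset[OF set_pmf_categorical_pmf_subset[OF assms]] by auto
  have "measure_pmf.expectation (multinomial_pmf (Suc n) M p) f =
      (\<Sum>N\<in>?S. pmf (multinomial_pmf n M p) N * (\<Sum>j<M. p j * f (N(j := Suc (N j)))))"
    using fin by (simp add: pmf_expectation_bind[of ?S] integral_categorical_pmf[OF assms])
  also have "\<dots> = measure_pmf.expectation (multinomial_pmf n M p) (\<lambda>N. \<Sum>j<M. p j * f (N(j := Suc (N j))))"
    using fin by (subst integral_measure_pmf[of ?S]) auto
  finally show ?thesis .
qed

definition falling_factorial :: "real \<Rightarrow> nat \<Rightarrow> real" where
  "falling_factorial x j = (\<Prod>i<j. x - real i)"

lemma falling_factorial_0 [simp]: "falling_factorial x 0 = 1"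
  by (simp add: falling_factorial_def)

lemma falling_factorial_Suc: "falling_factorial x (Suc j) = falling_factorial x j * (x - real j)"
  by (simp add: falling_factorial_def)

lemma falling_factorial_of_0: "j > 0 \<Longrightarrow> falling_factorial 0 j = 0"
  unfolding falling_factorial_def by (rule prod_zero) auto

lemma falling_factorial_plus_1:
  "falling_factorial (x + 1) j = falling_factorial x j + real j * falling_factorial x (j - 1)"
proof (cases j)
  case (Suc i)
  have "falling_factorial (x + 1) (Suc i) = (x + 1) * falling_factorial x i"
    unfolding falling_factorial_def by (subst prod.lessThan_Suc_shift) (simp add: algebra_simps)
  with Suc show ?thesis
    by (simp add: falling_factorial_Suc algebra_simps)
qed simp

lemma falling_factorial_numeral:
  "falling_factorial x 2 = x * (x - 1)"
  "falling_factorial x 3 = x * (x - 1) * (x - 2)"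
  "falling_factorial x 4 = x * (x - 1) * (x - 2) * (x - 3)"
  by (simp_all add: falling_factorial_def numeral_eq_Suc)

lemma sum_lessThan_mult_delta:
  "(\<Sum>j<(M::nat). p j * (if j = m then c else 0)) = (if m < M then p m else 0) * (c :: real)"
  by (simp add: if_distrib[of "\<lambda>x. p _ * x"] cong: if_cong)

lemma integral_multinomial_pmf_falling_factorial:
  assumes p_nonneg: "\<And>m. m < M \<Longrightarrow> p m \<ge> 0" and p_sum: "(\<Sum>m<M. p m) = 1" and "m \<noteq> k"
  defines "q \<equiv> pmf (categorical_pmf M p)"
  shows "measure_pmf.expectation (multinomial_pmf n M p)
           (\<lambda>N. falling_factorial (N m) a * falling_factorial (N k) b)
         = falling_factorial (real n) (a + b) * q m ^ a * q k ^ b"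
proof (induction n arbitrary: a b)
  case 0
  then show ?case
    by (cases a; cases b) (auto simp: falling_factorial_of_0)
next
  case (Suc n)
  let ?E = "measure_pmf.expectation (multinomial_pmf n M p)"
  let ?ff = "\<lambda>N a b. falling_factorial (N m) a * falling_factorial (N k) b"
  have q: "q i = (if i < M then p i else 0)" for i
    unfolding q_def by (rule pmf_categorical_pmf[OF p_nonneg p_sum])
  \<comment> \<open>a draw landing in cell \<open>j\<close> raises \<open>(N\<^sub>j)\<^sub>a\<close> by \<open>a (N\<^sub>j)\<^sub>a\<^sub>-\<^sub>1\<close>\<close>
  have step: "(\<Sum>j<M. p j * ?ff (N(j := Suc (N j))) a b) =
      ?ff N a b + q m * (real a * ?ff N (a - 1) b) + q k * (real b * ?ff N a (b - 1))" for N
  proof -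
    have "p j * ?ff (N(j := Suc (N j))) a b = p j * ?ff N a b
        + p j * (if j = m then real a * ?ff N (a - 1) b else 0)
        + p j * (if j = k then real b * ?ff N a (b - 1) else 0)" for j
      using \<open>m \<noteq> k\<close> falling_factorial_plus_1[of "real (N m)" a]
        falling_factorial_plus_1[of "real (N k)" b]
      by (auto simp: algebra_simps)
    then show ?thesis
      by (simp only: sum.distrib sum_lessThan_mult_delta q flip: sum_distrib_right) (simp add: p_sum)
  qed
  have fin: "finite (set_pmf (multinomial_pmf n M p))"
    using finite_set_pmf_multinomial_pmf[OF p_nonneg p_sum] .
  have "measure_pmf.expectation (multinomial_pmf (Suc n) M p) (\<lambda>N. ?ff N a b)
      = ?E (\<lambda>N. ?ff N a b) + q m * (real a * ?E (\<lambda>N. ?ff N (a - 1) b))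
          + q k * (real b * ?E (\<lambda>N. ?ff N a (b - 1)))"
    by (simp only: integral_multinomial_pmf_Suc[OF p_nonneg p_sum] step)
       (simp add: integrable_measure_pmf_finite[OF fin])
  also have "\<dots> = (falling_factorial (real n) (a + b)
      + real (a + b) * falling_factorial (real n) (a + b - 1)) * q m ^ a * q k ^ b"
    unfolding Suc.IH by (cases a; cases b) (auto simp: algebra_simps)
  also have "\<dots> = falling_factorial (real (Suc n)) (a + b) * q m ^ a * q k ^ b"
    using falling_factorial_plus_1[of "real n" "a + b"] by (simp add: add.commute)
  finally show ?case .
qed

lemma integral_multinomial_pmf_falling_factorial_single:
  assumes p_nonneg: "\<And>m. m < M \<Longrightarrow> p m \<ge> 0" and p_sum: "(\<Sum>m<M. p m) = 1" and "m < M"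
  shows "measure_pmf.expectation (multinomial_pmf n M p) (\<lambda>N. falling_factorial (N m) a)
           = falling_factorial (real n) a * p m ^ a"
  \<comment> \<open>any second index \<open>k \<noteq> m\<close> will do, since it enters with exponent \<open>0\<close>\<close>
  using integral_multinomial_pmf_falling_factorial[OF p_nonneg p_sum, of m "Suc m" n a 0] \<open>m < M\<close>
  by (simp add: pmf_categorical_pmf[OF p_nonneg p_sum])

lemma integral_multinomial_pmf_pairs:
  assumes p_nonneg: "\<And>m. m < M \<Longrightarrow> p m \<ge> 0" and p_sum: "(\<Sum>m<M. p m) = 1" and "m < M"
  shows "measure_pmf.expectation (multinomial_pmf n M p) (\<lambda>N. real (N m) * (real (N m) - 1))
           = real n * (real n - 1) * (p m)\<^sup>2"
  using integral_multinomial_pmf_falling_factorial_single[OF assms, of n 2]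
  by (simp add: falling_factorial_numeral)

lemma integral_multinomial_pmf_pairs_squared:
  fixes n :: nat
  assumes p_nonneg: "\<And>m. m < M \<Longrightarrow> p m \<ge> 0" and p_sum: "(\<Sum>m<M. p m) = 1" and "m < M"
  defines "x \<equiv> real n"
  shows "measure_pmf.expectation (multinomial_pmf n M p) (\<lambda>N. (real (N m) * (real (N m) - 1))\<^sup>2)
           = x * (x - 1) * (x - 2) * (x - 3) * p m ^ 4 + 4 * x * (x - 1) * (x - 2) * p m ^ 3
             + 2 * x * (x - 1) * (p m)\<^sup>2"
proof -
  let ?E = "measure_pmf.expectation (multinomial_pmf n M p)"
  let ?ff = "\<lambda>N a. falling_factorial (N m) a"
  have fin: "finite (set_pmf (multinomial_pmf n M p))"
    using finite_set_pmf_multinomial_pmf[OF p_nonneg p_sum] .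
  have "(\<lambda>N. (real (N m) * (real (N m) - 1))\<^sup>2) = (\<lambda>N. ?ff N 4 + 4 * ?ff N 3 + 2 * ?ff N 2)"
    by (simp add: falling_factorial_numeral power2_eq_square algebra_simps)
  then have "?E (\<lambda>N. (real (N m) * (real (N m) - 1))\<^sup>2)
      = ?E (\<lambda>N. ?ff N 4) + 4 * ?E (\<lambda>N. ?ff N 3) + 2 * ?E (\<lambda>N. ?ff N 2)"
    by (simp add: integrable_measure_pmf_finite[OF fin])
  also have "\<dots> = falling_factorial x 4 * p m ^ 4 + 4 * (falling_factorial x 3 * p m ^ 3)
      + 2 * (falling_factorial x 2 * (p m)\<^sup>2)"
    by (simp only: x_def integral_multinomial_pmf_falling_factorial_single[OF p_nonneg p_sum \<open>m < M\<close>])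
  finally show ?thesis
    by (simp add: falling_factorial_numeral algebra_simps)
qed

lemma integral_multinomial_pmf_pairs_mult:
  fixes n :: nat
  assumes p_nonneg: "\<And>m. m < M \<Longrightarrow> p m \<ge> 0" and p_sum: "(\<Sum>m<M. p m) = 1"
    and "m < M" "k < M" "m \<noteq> k"
  defines "x \<equiv> real n"
  shows "measure_pmf.expectation (multinomial_pmf n M p)
           (\<lambda>N. (real (N m) * (real (N m) - 1)) * (real (N k) * (real (N k) - 1)))
           = x * (x - 1) * (x - 2) * (x - 3) * (p m)\<^sup>2 * (p k)\<^sup>2"
  using integral_multinomial_pmf_falling_factorial[OF p_nonneg p_sum \<open>m \<noteq> k\<close>, of n 2 2] assms(3,4)
  by (simp add: x_def falling_factorial_numeral pmf_categorical_pmf[OF p_nonneg p_sum])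

definition normalized_pair_count :: "nat \<Rightarrow> real \<Rightarrow> nat \<Rightarrow> real" where
  "normalized_pair_count n q c = real c * (real c - 1) / (real n * (real n - 1) * q\<^sup>2) - 1"

lemma integral_normalized_pair_count_squared:
  fixes n :: nat
  assumes p_nonneg: "\<And>m. m < M \<Longrightarrow> p m \<ge> 0" and p_sum: "(\<Sum>m<M. p m) = 1"
    and "m < M" "p m > 0" "n \<ge> 2"
  defines "x \<equiv> real n"
  shows "measure_pmf.expectation (multinomial_pmf n M p) (\<lambda>N. (normalized_pair_count n (p m) (N m))\<^sup>2)
           = 4 * (x - 2) / (x * (x - 1) * p m) + 2 / (x * (x - 1) * (p m)\<^sup>2) - (4 * x - 6) / (x * (x - 1))"
proof -
  let ?E = "measure_pmf.expectation (multinomial_pmf n M p)"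
  let ?X = "\<lambda>N. real (N m) * (real (N m) - 1)"
  define d where "d = x * (x - 1)"
  have fin: "finite (set_pmf (multinomial_pmf n M p))"
    using finite_set_pmf_multinomial_pmf[OF p_nonneg p_sum] .
  have four_product: "x * (x - 1) * (x - 2) * (x - 3) = d * (d - (4 * x - 6))"
    by (simp add: d_def algebra_simps)
  have "d > 0" using \<open>n \<ge> 2\<close> by (simp add: d_def x_def)
  have "(\<lambda>N. (normalized_pair_count n (p m) (N m))\<^sup>2)
      = (\<lambda>N. (?X N)\<^sup>2 / (d * (p m)\<^sup>2)\<^sup>2 + 1 - 2 * ?X N / (d * (p m)\<^sup>2))"
    by (simp add: normalized_pair_count_def d_def x_def power2_diff power_divide)
  then have "?E (\<lambda>N. (normalized_pair_count n (p m) (N m))\<^sup>2)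
      = ?E (\<lambda>N. (?X N)\<^sup>2) / (d * (p m)\<^sup>2)\<^sup>2 + 1 - 2 * ?E ?X / (d * (p m)\<^sup>2)"
    by (simp add: integrable_measure_pmf_finite[OF fin])
  also have "\<dots> = (d * (d - (4 * x - 6)) * p m ^ 4 + 4 * d * (x - 2) * p m ^ 3 + 2 * d * (p m)\<^sup>2)
      / (d * (p m)\<^sup>2)\<^sup>2 + 1 - 2 * (d * (p m)\<^sup>2) / (d * (p m)\<^sup>2)"
    by (simp only: integral_multinomial_pmf_pairs_squared[OF p_nonneg p_sum \<open>m < M\<close>]
        integral_multinomial_pmf_pairs[OF p_nonneg p_sum \<open>m < M\<close>] flip: x_def)
       (simp add: four_product d_def algebra_simps)
  also have "\<dots> = 4 * (x - 2) / (d * p m) + 2 / (d * (p m)\<^sup>2) - (4 * x - 6) / d"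
    using \<open>d > 0\<close> \<open>p m > 0\<close>
    by (simp add: field_simps power2_eq_square power3_eq_cube power4_eq_xxxx)
  finally show ?thesis
    by (simp add: d_def)
qed

lemma integral_normalized_pair_count_mult:
  fixes n :: nat
  assumes p_nonneg: "\<And>m. m < M \<Longrightarrow> p m \<ge> 0" and p_sum: "(\<Sum>m<M. p m) = 1"
    and "m < M" "k < M" "m \<noteq> k" "p m > 0" "p k > 0" "n \<ge> 2"
  defines "x \<equiv> real n"
  shows "measure_pmf.expectation (multinomial_pmf n M p)
           (\<lambda>N. normalized_pair_count n (p m) (N m) * normalized_pair_count n (p k) (N k))
           = - (4 * x - 6) / (x * (x - 1))"
proof -
  let ?E = "measure_pmf.expectation (multinomial_pmf n M p)"
  let ?X = "\<lambda>j N. real (N j) * (real (N j) - 1)"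
  define d where "d = x * (x - 1)"
  have fin: "finite (set_pmf (multinomial_pmf n M p))"
    using finite_set_pmf_multinomial_pmf[OF p_nonneg p_sum] .
  have four_product: "x * (x - 1) * (x - 2) * (x - 3) = d * (d - (4 * x - 6))"
    by (simp add: d_def algebra_simps)
  have "d > 0" using \<open>n \<ge> 2\<close> by (simp add: d_def x_def)
  have "(\<lambda>N. normalized_pair_count n (p m) (N m) * normalized_pair_count n (p k) (N k))
      = (\<lambda>N. ?X m N * ?X k N / (d * (p m)\<^sup>2 * (d * (p k)\<^sup>2))
             - ?X m N / (d * (p m)\<^sup>2) - ?X k N / (d * (p k)\<^sup>2) + 1)"
    by (simp add: normalized_pair_count_def d_def x_def algebra_simps)
  then have "?E (\<lambda>N. normalized_pair_count n (p m) (N m) * normalized_pair_count n (p k) (N k))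
      = ?E (\<lambda>N. ?X m N * ?X k N) / (d * (p m)\<^sup>2 * (d * (p k)\<^sup>2))
        - ?E (?X m) / (d * (p m)\<^sup>2) - ?E (?X k) / (d * (p k)\<^sup>2) + 1"
    by (simp add: integrable_measure_pmf_finite[OF fin])
  also have "\<dots> = d * (d - (4 * x - 6)) * (p m)\<^sup>2 * (p k)\<^sup>2 / (d * (p m)\<^sup>2 * (d * (p k)\<^sup>2))
        - (d * (p m)\<^sup>2) / (d * (p m)\<^sup>2) - (d * (p k)\<^sup>2) / (d * (p k)\<^sup>2) + 1"
    by (simp only: integral_multinomial_pmf_pairs_mult[OF p_nonneg p_sum \<open>m < M\<close> \<open>k < M\<close> \<open>m \<noteq> k\<close>]
        integral_multinomial_pmf_pairs[OF p_nonneg p_sum \<open>m < M\<close>]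
        integral_multinomial_pmf_pairs[OF p_nonneg p_sum \<open>k < M\<close>] four_product flip: x_def)
       (simp add: d_def)
  also have "\<dots> = - (4 * x - 6) / d"
    using \<open>d > 0\<close> \<open>p m > 0\<close> \<open>p k > 0\<close> by (simp add: field_simps power2_eq_square)
  finally show ?thesis
    by (simp add: d_def)
qed

lemma integral_weighted_normalized_pair_counts_squared:
  fixes n :: nat and \<alpha> :: "nat \<Rightarrow> real"
  assumes p_pos: "\<And>m. m < M \<Longrightarrow> p m > 0" and p_sum: "(\<Sum>m<M. p m) = 1" and "n \<ge> 2"
  defines "x \<equiv> real n"
  shows "measure_pmf.expectation (multinomial_pmf n M p)
           (\<lambda>N. (\<Sum>m<M. \<alpha> m * normalized_pair_count n (p m) (N m))\<^sup>2)
         = (\<Sum>m<M. (\<alpha> m)\<^sup>2 * (4 * (x - 2) / (x * (x - 1) * p m) + 2 / (x * (x - 1) * (p m)\<^sup>2)))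
           - (4 * x - 6) / (x * (x - 1)) * (\<Sum>m<M. \<alpha> m)\<^sup>2"
proof -
  let ?E = "measure_pmf.expectation (multinomial_pmf n M p)"
  let ?Y = "\<lambda>m N. normalized_pair_count n (p m) (N m)"
  define v where "v m = 4 * (x - 2) / (x * (x - 1) * p m) + 2 / (x * (x - 1) * (p m)\<^sup>2)" for m
  define r where "r = (4 * x - 6) / (x * (x - 1))"
  have p_nonneg: "p m \<ge> 0" if "m < M" for m
    using p_pos[OF that] by simp
  have fin: "finite (set_pmf (multinomial_pmf n M p))"
    using finite_set_pmf_multinomial_pmf[OF p_nonneg p_sum] .
  have covariance: "?E (\<lambda>N. ?Y m N * ?Y k N) = (if k = m then v m else 0) - r"
    if "m < M" "k < M" for m k
  proof (cases "m = k")
    case True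
    then show ?thesis
      using integral_normalized_pair_count_squared[OF p_nonneg p_sum \<open>m < M\<close> p_pos \<open>n \<ge> 2\<close>] that
      by (simp add: power2_eq_square v_def r_def x_def)
  next
    case False
    then show ?thesis
      using integral_normalized_pair_count_mult[OF p_nonneg p_sum that False p_pos p_pos \<open>n \<ge> 2\<close>] that
      by (simp add: r_def x_def minus_divide_left)
  qed
  have "?E (\<lambda>N. (\<Sum>m<M. \<alpha> m * ?Y m N)\<^sup>2) = ?E (\<lambda>N. \<Sum>m<M. \<Sum>k<M. \<alpha> m * \<alpha> k * (?Y m N * ?Y k N))"
    by (simp add: power2_eq_square sum_product algebra_simps)
  also have "\<dots> = (\<Sum>m<M. \<Sum>k<M. \<alpha> m * \<alpha> k * ((if k = m then v m else 0) - r))"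
    by (simp add: integrable_measure_pmf_finite[OF fin] covariance)
  also have "\<dots> = (\<Sum>m<M. \<Sum>k<M. (if k = m then (\<alpha> m)\<^sup>2 * v m else 0) - r * (\<alpha> m * \<alpha> k))"
    by (intro sum.cong refl) (auto simp: power2_eq_square algebra_simps)
  also have "\<dots> = (\<Sum>m<M. (\<alpha> m)\<^sup>2 * v m) - r * (\<Sum>m<M. \<alpha> m)\<^sup>2"
    by (simp add: sum_subtractf power2_eq_square sum_product flip: sum_distrib_left)
  finally show ?thesis
    by (simp add: v_def r_def)
qed

lemma pair_count_variance_le:
  fixes x q z :: real
  assumes "x \<ge> 2" "z > 0" "z \<le> x * q"
  shows "4 * (x - 2) / (x * (x - 1) * q) + 2 / (x * (x - 1) * q\<^sup>2) \<le> 4 / z + 4 / z\<^sup>2"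
proof (rule add_mono)
  have "x * q > 0"
    using assms by linarith
  then have "q > 0"
    using assms by (simp add: zero_less_mult_iff)
  have "4 * (x - 2) / (x * (x - 1) * q) \<le> 4 * (x - 1) / (x * (x - 1) * q)"
    using assms \<open>q > 0\<close> by (intro divide_right_mono) auto
  also have "\<dots> = 4 / (x * q)"
    using assms \<open>q > 0\<close> by (simp add: divide_simps)
  also have "\<dots> \<le> 4 / z"
    using assms by (intro divide_left_mono) auto
  finally show "4 * (x - 2) / (x * (x - 1) * q) \<le> 4 / z" .
  have "z\<^sup>2 / 2 \<le> (x * q)\<^sup>2 / 2"
    using assms by (intro divide_right_mono power_mono) auto
  also have "\<dots> = x * (x / 2) * q\<^sup>2"
    by (simp add: power2_eq_square)
  also have "\<dots> \<le> x * (x - 1) * q\<^sup>2"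
    using assms by (intro mult_right_mono mult_left_mono) auto
  finally have "2 / (x * (x - 1) * q\<^sup>2) \<le> 2 / (z\<^sup>2 / 2)"
    using assms \<open>q > 0\<close> by (intro divide_left_mono mult_pos_pos) auto
  then show "2 / (x * (x - 1) * q\<^sup>2) \<le> 4 / z\<^sup>2"
    by simp
qed

lemma integral_weighted_normalized_pair_counts_squared_le:
  fixes n :: nat and \<alpha> :: "nat \<Rightarrow> real"
  assumes p_nonneg: "\<And>m. m < M \<Longrightarrow> p m \<ge> 0" and p_sum: "(\<Sum>m<M. p m) = 1"
    and "z > 0" and z_le: "\<And>m. m < M \<Longrightarrow> z \<le> real n * p m" and "n \<ge> 2"
  shows "measure_pmf.expectation (multinomial_pmf n M p)
           (\<lambda>N. (\<Sum>m<M. \<alpha> m * normalized_pair_count n (p m) (N m))\<^sup>2)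
         \<le> (4 / z + 4 / z\<^sup>2) * Max ((\<lambda>m. \<bar>\<alpha> m\<bar>) ` {..<M}) * (\<Sum>m<M. \<bar>\<alpha> m\<bar>)"
proof -
  define x where "x = real n"
  define K where "K = 4 / z + 4 / z\<^sup>2"
  define A where "A = Max ((\<lambda>m. \<bar>\<alpha> m\<bar>) ` {..<M})"
  have "x \<ge> 2" using \<open>n \<ge> 2\<close> by (simp add: x_def)
  have p_pos: "p m > 0" if "m < M" for m
  proof -
    have "real n * p m > 0"
      using z_le[OF that] \<open>z > 0\<close> by linarith
    then show ?thesis
      by (simp add: zero_less_mult_iff)
  qed
  have "(4 * x - 6) / (x * (x - 1)) * (\<Sum>m<M. \<alpha> m)\<^sup>2 \<ge> 0"
    using \<open>x \<ge> 2\<close> by simp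
  then have "measure_pmf.expectation (multinomial_pmf n M p)
           (\<lambda>N. (\<Sum>m<M. \<alpha> m * normalized_pair_count n (p m) (N m))\<^sup>2)
      \<le> (\<Sum>m<M. (\<alpha> m)\<^sup>2 * (4 * (x - 2) / (x * (x - 1) * p m) + 2 / (x * (x - 1) * (p m)\<^sup>2)))"
    by (simp only: integral_weighted_normalized_pair_counts_squared[OF p_pos p_sum \<open>n \<ge> 2\<close>]
        flip: x_def)
  also have "\<dots> \<le> (\<Sum>m<M. K * A * \<bar>\<alpha> m\<bar>)"
  proof (rule sum_mono)
    fix m assume "m \<in> {..<M}"
    then have "\<bar>\<alpha> m\<bar> \<le> A" by (simp add: A_def)
    have "(\<alpha> m)\<^sup>2 * (4 * (x - 2) / (x * (x - 1) * p m) + 2 / (x * (x - 1) * (p m)\<^sup>2)) \<le> (\<alpha> m)\<^sup>2 * K"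
      unfolding K_def using \<open>m \<in> {..<M}\<close> \<open>x \<ge> 2\<close> \<open>z > 0\<close> z_le
      by (intro mult_left_mono pair_count_variance_le) (auto simp: x_def)
    also have "\<dots> = K * \<bar>\<alpha> m\<bar> * \<bar>\<alpha> m\<bar>"
      by (simp add: power2_eq_square)
    also have "\<dots> \<le> K * A * \<bar>\<alpha> m\<bar>"
      using \<open>\<bar>\<alpha> m\<bar> \<le> A\<close> \<open>z > 0\<close> by (intro mult_right_mono mult_left_mono) (auto simp: K_def)
    finally show "(\<alpha> m)\<^sup>2 * (4 * (x - 2) / (x * (x - 1) * p m) + 2 / (x * (x - 1) * (p m)\<^sup>2))
        \<le> K * A * \<bar>\<alpha> m\<bar>" .
  qed
  finally show ?thesis
    by (simp add: K_def A_def sum_distrib_left)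
qed

lemma prob_weighted_normalized_pair_counts_deviation_le:
  fixes n :: nat and \<alpha> :: "nat \<Rightarrow> real"
  assumes p_nonneg: "\<And>m. m < M \<Longrightarrow> p m \<ge> 0" and p_sum: "(\<Sum>m<M. p m) = 1"
    and "z > 0" and "\<And>m. m < M \<Longrightarrow> z \<le> real n * p m" and "n \<ge> 2"
    and "\<epsilon> > 0" and "(\<Sum>m<M. \<bar>\<alpha> m\<bar>) \<le> B"
  shows "measure_pmf.prob (multinomial_pmf n M p)
           {N. \<epsilon> < \<bar>\<Sum>m<M. \<alpha> m * normalized_pair_count n (p m) (N m)\<bar>}
         \<le> Max ((\<lambda>m. \<bar>\<alpha> m\<bar>) ` {..<M}) * ((4 / z + 4 / z\<^sup>2) * B / \<epsilon>\<^sup>2)"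
proof -
  let ?S = "\<lambda>N. \<Sum>m<M. \<alpha> m * normalized_pair_count n (p m) (N m)"
  let ?P = "multinomial_pmf n M p"
  define A where "A = Max ((\<lambda>m. \<bar>\<alpha> m\<bar>) ` {..<M})"
  have "M \<noteq> 0"
    using p_sum by (intro notI) simp
  then have "A \<ge> 0"
    unfolding A_def by (intro order_trans[OF abs_ge_zero Max_ge]) auto
  have "measure_pmf.prob ?P {N. \<epsilon> < \<bar>?S N\<bar>} \<le> measure_pmf.prob ?P {N \<in> space ?P. \<epsilon> \<le> \<bar>?S N\<bar>}"
    by (intro measure_pmf.finite_measure_mono) auto
  also have "\<dots> \<le> measure_pmf.expectation ?P (\<lambda>N. (?S N)\<^sup>2) / \<epsilon>\<^sup>2"
    using \<open>\<epsilon> > 0\<close> finite_set_pmf_multinomial_pmf[OF p_nonneg p_sum]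
    by (intro measure_pmf.second_moment_method) (auto intro: integrable_measure_pmf_finite)
  also have "\<dots> \<le> (4 / z + 4 / z\<^sup>2) * A * (\<Sum>m<M. \<bar>\<alpha> m\<bar>) / \<epsilon>\<^sup>2"
    using integral_weighted_normalized_pair_counts_squared_le[OF assms(1-5)]
    by (intro divide_right_mono) (auto simp: A_def)
  also have "\<dots> \<le> (4 / z + 4 / z\<^sup>2) * A * B / \<epsilon>\<^sup>2"
    using assms \<open>A \<ge> 0\<close> by (intro divide_right_mono mult_left_mono) auto
  also have "\<dots> = A * ((4 / z + 4 / z\<^sup>2) * B / \<epsilon>\<^sup>2)"
    by (simp add: algebra_simps)
  finally show ?thesis
    by (simp only: A_def)
qed

lemma eventually_le_mult_Min_of_liminf_pos:
  fixes p :: "nat \<Rightarrow> nat \<Rightarrow> real"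
  assumes "liminf (\<lambda>n. ereal (real n * Min (p n ` {..<M n}))) > 0"
  obtains z where "z > 0" "eventually (\<lambda>n. \<forall>m<M n. z \<le> real n * p n m) sequentially"
proof -
  obtain z where "0 < z" and z_less: "ereal z < liminf (\<lambda>n. ereal (real n * Min (p n ` {..<M n})))"
    using ereal_dense2[OF assms] by (metis ereal_less(2) less_ereal.simps(1))
  from less_LiminfD[OF z_less]
  have "eventually (\<lambda>n. z < real n * Min (p n ` {..<M n})) sequentially"
    by simp
  then have "eventually (\<lambda>n. \<forall>m<M n. z \<le> real n * p n m) sequentially"
    by (rule eventually_mono) (auto intro: order_trans[OF less_imp_le mult_left_mono] Min_le)
  with \<open>0 < z\<close> show thesis ..
qed

theorem corollary3:
  fixes M :: "nat \<Rightarrow> nat"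
    and p :: "nat \<Rightarrow> nat \<Rightarrow> real"
    and \<alpha> :: "nat \<Rightarrow> nat \<Rightarrow> real"
  assumes p_nonneg: "\<And>n m. m < M n \<Longrightarrow> p n m \<ge> 0"
    and p_sum: "\<And>n. (\<Sum>m<M n. p n m) = 1"
    and p_min: "liminf (\<lambda>n. ereal (real n * Min (p n ` {..<M n}))) > 0"
    and alpha_sum: "(\<lambda>n. \<Sum>m<M n. \<bar>\<alpha> n m\<bar>) \<in> O(\<lambda>_. 1)"
    and alpha_max: "(\<lambda>n. Max ((\<lambda>m. \<bar>\<alpha> n m\<bar>) ` {..<M n})) \<longlonglongrightarrow> 0"
  shows "\<forall>\<epsilon>>0. (\<lambda>n. measure_pmf.prob (multinomial_pmf n (M n) (p n))
            {N. \<bar>\<Sum>m<M n. \<alpha> n m *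
                 (real (N m) * (real (N m) - 1) / (real n * (real n - 1) * (p n m)\<^sup>2) - 1)\<bar> > \<epsilon>})
          \<longlonglongrightarrow> 0"
proof (intro allI impI)
  fix \<epsilon> :: real assume "\<epsilon> > 0"
  obtain z where "z > 0" and z_le: "eventually (\<lambda>n. \<forall>m<M n. z \<le> real n * p n m) sequentially"
    using eventually_le_mult_Min_of_liminf_pos[OF p_min] .
  obtain B where B: "eventually (\<lambda>n. (\<Sum>m<M n. \<bar>\<alpha> n m\<bar>) \<le> B) sequentially"
    using alpha_sum by (elim landau_o.bigE) (auto elim!: eventually_mono)
  define C where "C = (4 / z + 4 / z\<^sup>2) * B / \<epsilon>\<^sup>2"
  have "eventually (\<lambda>n. measure_pmf.prob (multinomial_pmf n (M n) (p n))
          {N. \<epsilon> < \<bar>\<Sum>m<M n. \<alpha> n m * normalized_pair_count n (p n m) (N m)\<bar>}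
        \<le> Max ((\<lambda>m. \<bar>\<alpha> n m\<bar>) ` {..<M n}) * C) sequentially"
    unfolding C_def using z_le B eventually_ge_at_top[of 2]
    by eventually_elim
       (rule prob_weighted_normalized_pair_counts_deviation_le; use p_nonneg p_sum \<open>z > 0\<close> \<open>\<epsilon> > 0\<close> in auto)
  from tendsto_sandwich[OF _ this tendsto_const tendsto_mult_left_zero[OF alpha_max]]
  show "(\<lambda>n. measure_pmf.prob (multinomial_pmf n (M n) (p n))
            {N. \<bar>\<Sum>m<M n. \<alpha> n m *
                 (real (N m) * (real (N m) - 1) / (real n * (real n - 1) * (p n m)\<^sup>2) - 1)\<bar> > \<epsilon>})
          \<longlonglongrightarrow> 0"
    by (simp add: normalized_pair_count_def)
qed

end
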